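(* Let $d\in\mathbb{N}$ and $\xi=(\xi^0,\xi^1,\dots,\xi^d)\in\mathbb{C}^{d+1}$ with $\xi^j\neq\xi^k$ for $j\neq k$. Let $p:\mathbb{C}\to\mathbb{C}$ be a polynomial of degree $d$. Then \[ \|p\|_{T([-1,1])}=\sum_{j=0}^d\Big|\sum_{k=0}^dT(\xi)^j{}_k\,p(\xi^k)\Big|. \]
   Context: $T_m$ is the Chebyshev polynomial with $T_m(\cos z)=\cos(mz)$. For a nonzero polynomial $p$ of one variable, writing uniquely $p(x)=\sum_{j=0}^{\deg p}c_jT_j(x)$, $\|p\|_{T([-1,1])}:=\sum_{j=0}^{\deg p}|c_j|$. For $j,k\in\mathbb{N}_0$: $C^j{}_k:=0$ if $j>k$; for $j\le k$: $C^j{}_k:=2^{1-k}\binom{k}{\frac{k-1}{2}-\frac{j-1}{2}}$ if $k,j$ odd; $C^0{}_k:=2^{-k}\binom{k}{k/2}$ if $k$ even; $C^j{}_k:=2^{1-k}\binom{k}{\frac k2-\frac j2}$ if $k,j$ even and $j\ge2$; $C^j{}_k:=0$ otherwise. For $n\in\mathbb{N}$, $\eta=(\eta^1,\dots,\eta^n)\in\mathbb{C}^n$, $j\in\{0,\dots,n\}$, $k\in\{0,\dots,j\}$, define recursively $a_{j,0}(\eta):=\prod_{\ell=1}^j\eta^\ell$, $a_{j,k}(\eta):=a_{j-1,k-1}(\eta)+\eta^ja_{j-1,k}(\eta)$ for $1\le k\le j-1$, $a_{j,j}(\eta):=1$. For $k\in\{0,\dots,d\}$, let $\xi_{(k)}\in\mathbb{C}^d$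 be the vector obtained from $\xi$ by deleting the entry $\xi^k$ (remaining entries in their original order). Set $L(\xi)^j{}_k:=\frac{a_{d,j}(-\xi_{(k)})}{\prod_{\ell\in\{0,\dots,d\}\setminus\{k\}}(\xi^k-\xi^\ell)}$ and $T(\xi)^j{}_k:=\sum_{\ell=0}^dC^j{}_\ell L(\xi)^\ell{}_k$ for $j,k\in\{0,\dots,d\}$. *)

theory Defs
  imports "HOL-Analysis.Analysis" "HOL-Computational_Algebra.Polynomial"
begin

fun cheb :: "nat \<Rightarrow> complex poly" where
  "cheb 0 = 1"
| "cheb (Suc 0) = [:0, 1:]"
| "cheb (Suc (Suc n)) = [:0, 2:] * cheb (Suc n) - cheb n"

text \<open>Sanity check: this is the polynomial with T_m(cos z) = cos(m z).\<close>
lemma cheb_cos: "poly (cheb m) (cos z) = cos (of_nat m * z)"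
proof (induction m rule: cheb.induct)
  case 1 then show ?case by simp
next
  case 2 then show ?case by simp
next
  case (3 n)
  have "cos (of_nat (Suc (Suc n)) * z) = cos ((of_nat (Suc n)) * z + z)"
    by (simp add: algebra_simps)
  also have "\<dots> = 2 * cos z * cos (of_nat (Suc n) * z) - cos (of_nat n * z)"
    using cos_add[of "of_nat (Suc n) * z" z] cos_diff[of "of_nat (Suc n) * z" z]
    by (simp add: algebra_simps)
  finally show ?case using 3 by simp
qed

definition cheb_coeffs :: "complex poly \<Rightarrow> nat \<Rightarrow> complex" where
  "cheb_coeffs p = (THE c. (\<forall>j>degree p. c j = 0) \<and>
       p = (\<Sum>j\<le>degree p. smult (c j) (cheb j)))"

definition cheb_norm :: "complex poly \<Rightarrow> real" where
  "cheb_norm p = (\<Sum>j\<le>degree p. cmod (cheb_coeffs p j))"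

definition Ccoef :: "nat \<Rightarrow> nat \<Rightarrow> real" where
  "Ccoef j k =
    (if j > k then 0
     else if odd k \<and> odd j then 2 / 2 ^ k * real (k choose ((k - 1) div 2 - (j - 1) div 2))
     else if even k \<and> j = 0 then 1 / 2 ^ k * real (k choose (k div 2))
     else if even k \<and> even j \<and> j \<ge> 2 then 2 / 2 ^ k * real (k choose (k div 2 - j div 2))
     else 0)"

text \<open>a_{j,k}(eta), with eta = (eta^1,...,eta^n) given as a function on indices 1..n.\<close>
fun acoef :: "(nat \<Rightarrow> complex) \<Rightarrow> nat \<Rightarrow> nat \<Rightarrow> complex" where
  "acoef \<eta> 0 k = (if k = 0 then 1 else 0)"
| "acoef \<eta> (Suc j) k =
     (if k = 0 then (\<Prod>l\<in>{1..Suc j}. \<eta> l)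
      else if k = Suc j then 1
      else if k < Suc j then acoef \<eta> j (k - 1) + \<eta> (Suc j) * acoef \<eta> j k
      else 0)"

text \<open>xi_(k): delete entry xi^k from (xi^0,...,xi^d); result indexed 1..d.\<close>
definition delete_entry :: "(nat \<Rightarrow> complex) \<Rightarrow> nat \<Rightarrow> nat \<Rightarrow> complex" where
  "delete_entry \<xi> k l = (if l \<le> k then \<xi> (l - 1) else \<xi> l)"

definition Lmat :: "nat \<Rightarrow> (nat \<Rightarrow> complex) \<Rightarrow> nat \<Rightarrow> nat \<Rightarrow> complex" where
  "Lmat d \<xi> j k = acoef (\<lambda>l. - delete_entry \<xi> k l) d j /
       (\<Prod>l\<in>{0..d} - {k}. (\<xi> k - \<xi> l))"

definition Tmat :: "nat \<Rightarrow> (nat \<Rightarrow> complex) \<Rightarrow> nat \<Rightarrow> nat \<Rightarrow> complex" where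
  "Tmat d \<xi> j k = (\<Sum>l=0..d. complex_of_real (Ccoef j l) * Lmat d \<xi> l k)"

end

theory Submission
  imports Defs
begin

(* By Lagrange interpolation, L(xi) maps the values p(xi^k)
   to the monomial coefficients of p, since by Vieta a_{d,j}(-xi_(k)) is the j-th coefficient of
   prod_{l /= k} (x - xi^l). The matrix C changes the monomial basis into the Chebyshev basis,
   x^l = sum_j C^j_l T_j, which follows by induction on l from x T_j = (T_{j+1} + T_{|j-1|}) / 2
   and Pascal's rule. Hence the inner sums are exactly the Chebyshev coefficients of p. *)

lemma smult_sum_right: "smult c (\<Sum>i\<in>A. f i) = (\<Sum>i\<in>A. smult c (f i))"
  by (induction A rule: infinite_finite_induct) (auto simp: smult_add_right)

lemma degree_cheb_le: "degree (cheb n) \<le> n"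
  and coeff_cheb_self: "coeff (cheb n) n = (if n = 0 then 1 else 2 ^ (n - 1))"
proof (induction n rule: cheb.induct)
  case (3 n)
  {
    case 1
    have "degree ([:0, 2:] * cheb (Suc n)) \<le> Suc (Suc n)"
      using "3.IH"(1) degree_mult_le[of "[:0, 2:]" "cheb (Suc n)"] by simp
    moreover have "degree (cheb n) \<le> Suc (Suc n)"
      using "3.IH"(3) by simp
    ultimately show ?case by (simp add: degree_diff_le)
  next
    case 2
    have "coeff (cheb n) (Suc (Suc n)) = 0"
      using "3.IH"(3) by (intro coeff_eq_0) simp
    then show ?case using "3.IH"(2) by simp
  }
qed simp_all

lemma coeff_cheb_self_neq_0: "coeff (cheb n) n \<noteq> 0"
  by (simp add: coeff_cheb_self)

lemma cheb_sum_eq_0_imp_eq_0: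
  assumes "(\<Sum>j\<le>n. smult (c j) (cheb j)) = 0" "j \<le> n"
  shows "c j = 0"
  using assms
proof (induction n arbitrary: j)
  case 0
  then show ?case by simp
next
  case (Suc n)
  have "coeff (cheb j) (Suc n) = 0" if "j \<le> n" for j
    using degree_cheb_le[of j] that by (intro coeff_eq_0) simp
  then have "coeff (\<Sum>j\<le>Suc n. smult (c j) (cheb j)) (Suc n)
      = c (Suc n) * coeff (cheb (Suc n)) (Suc n)"
    by (simp add: coeff_sum)
  with Suc.prems(1) have "c (Suc n) = 0"
    using coeff_cheb_self_neq_0 by simp
  with Suc show ?case by (cases "j = Suc n") auto
qed

lemma cheb_coeffs_eqI:
  assumes "\<forall>j>degree p. c j = 0" "p = (\<Sum>j\<le>degree p. smult (c j) (cheb j))"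
  shows "cheb_coeffs p = c"
  unfolding cheb_coeffs_def
proof (rule the_equality)
  fix c' assume c': "(\<forall>j>degree p. c' j = 0) \<and> p = (\<Sum>j\<le>degree p. smult (c' j) (cheb j))"
  have "(\<Sum>j\<le>degree p. smult (c' j - c j) (cheb j)) = 0"
    using c' assms by (simp add: smult_diff_left sum_subtractf)
  then have "c' j = c j" if "j \<le> degree p" for j
    using cheb_sum_eq_0_imp_eq_0 that by fastforce
  with c' assms show "c' = c"
    by (metis not_le ext)
qed (use assms in blast)

lemma pCons_0_1_times_cheb:
  "[:0, 1:] * cheb j = smult (1/2) (cheb (Suc j) + cheb (if j = 0 then 1 else j - 1))"
proof (cases j)
  case (Suc i)
  have "cheb (Suc (Suc i)) + cheb i = smult 2 ([:0, 1:] * cheb (Suc i))"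
    by simp
  then show ?thesis using Suc by simp
qed (simp flip: smult_add_left)

lemma Ccoef_altdef:
  "Ccoef j l = (if j \<le> l \<and> even (l - j)
     then (if j = 0 then 1 else 2) / 2 ^ l * real (l choose ((l - j) div 2)) else 0)"
  unfolding Ccoef_def
  by (auto elim!: oddE evenE simp: not_less diff_mult_distrib2[symmetric]; simp add: not_le)

lemma Ccoef_eq_0: "l < j \<Longrightarrow> Ccoef j l = 0"
  by (simp add: Ccoef_def)

(* The recurrence of the coefficients behind x T_j = (T_{j+1} + T_{|j-1|}) / 2: Pascal's rule,
   together with the symmetry of the central binomial coefficients for m = 0. *)
lemma Ccoef_Suc:
  "Ccoef m (Suc l) = ((if m = 0 then 0 else Ccoef (m - 1) l) + Ccoef (Suc m) l
     + (if m = 1 then Ccoef 0 l else 0)) / 2"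
proof (cases "m \<le> Suc l \<and> even (Suc l - m)")
  case False
  then show ?thesis
    by (auto simp: Ccoef_altdef)
next
  case True
  then obtain r where r: "Suc l = m + 2 * r"
    by (metis evenE le_add_diff_inverse)
  consider "m = 0" | "m = 1" | i where "m = Suc (Suc i)"
    by (metis One_nat_def not0_implies_Suc)
  then show ?thesis
  proof cases
    case 1
    then obtain s where "l = 2 * s + 1"
      using r by (cases r) auto
    moreover have "Suc (2 * s + 1) choose Suc s = 2 * (Suc (2 * s) choose s)"
      using binomial_symmetric[of s "Suc (2 * s)"] by simp
    ultimately show ?thesis
      using 1 by (simp add: Ccoef_altdef)
  next
    case 2
    then have "l = 2 * r" using r by simp
    then show ?thesis using 2
      by (cases r) (auto simp add: Ccoef_altdef field_simps)
  next
    case 3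
    show ?thesis
    proof (cases r)
      case 0 then show ?thesis using r 3 by (simp add: Ccoef_altdef)
    next
      case (Suc s)
      then have "Suc l - m = 2 * Suc s" "l - Suc i = 2 * Suc s"
        and "l - Suc m = 2 * s" "Suc m \<le> l"
        using r 3 by simp_all
      moreover have "Suc l choose Suc s = (l choose s) + (l choose Suc s)"
        by simp
      ultimately show ?thesis using 3 True by (simp add: Ccoef_altdef field_simps)
    qed
  qed
qed

lemma monom_eq_sum_cheb:
  "monom 1 l = (\<Sum>j\<le>l. smult (of_real (Ccoef j l)) (cheb j))"
proof (induction l)
  case 0
  then show ?case by (simp add: Ccoef_def)
next
  case (Suc l)
  define c where "c j = complex_of_real (Ccoef j l)" for j
  have c_eq_0: "c j = 0" if "l < j" for j
    using that by (simp add: c_def Ccoef_eq_0)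
  have c_Suc: "of_real (Ccoef m (Suc l))
      = ((if m = 0 then 0 else c (m - 1)) + c (Suc m) + (if m = 1 then c 0 else 0)) / 2" for m
    by (simp add: Ccoef_Suc c_def)
  have up: "(\<Sum>j\<le>l. smult (c j) (cheb (Suc j)))
      = (\<Sum>m\<le>Suc l. smult (if m = 0 then 0 else c (m - 1)) (cheb m))"
    by (subst sum.atMost_Suc_shift) simp
  have down: "(\<Sum>j\<le>l. smult (c j) (cheb (if j = 0 then 1 else j - 1)))
      = (\<Sum>m\<le>Suc l. smult (c (Suc m) + (if m = 1 then c 0 else 0)) (cheb m))"
  proof -
    have "(\<Sum>j\<le>l. smult (c j) (cheb (if j = 0 then 1 else j - 1)))
        = (\<Sum>j\<le>Suc l. smult (c j) (cheb (if j = 0 then 1 else j - 1)))"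
      using c_eq_0[of "Suc l"] by simp
    also have "\<dots> = smult (c 0) (cheb 1) + (\<Sum>m\<le>l. smult (c (Suc m)) (cheb m))"
      by (subst sum.atMost_Suc_shift) simp
    also have "\<dots> = (\<Sum>m\<le>Suc l. smult (c (Suc m) + (if m = 1 then c 0 else 0)) (cheb m))"
      using c_eq_0[of "Suc (Suc l)"]
      by (simp add: smult_add_left sum.distrib if_distrib[of "\<lambda>a. smult a _"] cong: if_cong)
    finally show ?thesis .
  qed
  have "monom (1::complex) (Suc l) = [:0, 1:] * monom 1 l"
    by (simp add: monom_Suc)
  also have "\<dots> = (\<Sum>j\<le>l. smult (c j) ([:0, 1:] * cheb j))"
    unfolding Suc by (simp add: c_def sum_distrib_left mult_smult_right)
  also have "\<dots> = smult (1/2) ((\<Sum>j\<le>l. smult (c j) (cheb (Suc j)))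
      + (\<Sum>j\<le>l. smult (c j) (cheb (if j = 0 then 1 else j - 1))))"
    unfolding pCons_0_1_times_cheb by (simp add: smult_sum_right smult_add_right sum.distrib)
  also have "\<dots> = (\<Sum>m\<le>Suc l. smult (of_real (Ccoef m (Suc l))) (cheb m))"
    unfolding up down c_Suc
    by (simp add: smult_sum_right smult_add_left smult_add_right sum.distrib add_divide_distrib
        del: sum.atMost_Suc)
  finally show ?case .
qed

lemma cheb_coeffs_eq_sum_coeff:
  "cheb_coeffs p j = (\<Sum>l\<le>degree p. of_real (Ccoef j l) * coeff p l)"
proof -
  define n where "n = degree p"
  define c where "c j = (\<Sum>l\<le>n. of_real (Ccoef j l) * coeff p l)" for j
  have monom_eq: "monom 1 l = (\<Sum>j\<le>n. smult (of_real (Ccoef j l)) (cheb j))" if "l \<le> n" for l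
    unfolding monom_eq_sum_cheb using that
    by (intro sum.mono_neutral_left) (auto simp: Ccoef_eq_0)
  have "p = (\<Sum>l\<le>n. smult (coeff p l) (monom 1 l))"
    by (subst poly_as_sum_of_monoms[symmetric]) (simp add: n_def smult_monom)
  also have "\<dots> = (\<Sum>l\<le>n. \<Sum>j\<le>n. smult (of_real (Ccoef j l) * coeff p l) (cheb j))"
    by (simp add: monom_eq smult_sum_right mult.commute)
  also have "\<dots> = (\<Sum>j\<le>n. smult (c j) (cheb j))"
    by (subst sum.swap) (simp add: c_def smult_sum)
  finally have "p = (\<Sum>j\<le>degree p. smult (c j) (cheb j))"
    by (simp add: n_def)
  moreover have "\<forall>j>degree p. c j = 0"
    by (simp add: c_def n_def Ccoef_eq_0)
  ultimately show ?thesis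
    using cheb_coeffs_eqI by (simp add: c_def n_def)
qed

lemma acoef_eq_coeff_prod:
  "acoef \<eta> n k = coeff (\<Prod>l\<in>{1..n}. [:\<eta> l, 1:]) k"
proof (induction n arbitrary: k)
  case 0
  then show ?case by simp
next
  case (Suc n)
  define Q where "Q = (\<Prod>l\<in>{1..n}. [:\<eta> l, 1:])"
  have degree_Q: "degree Q = n" and coeff_Q_n: "coeff Q n = 1"
    using lead_coeff_prod[of "\<lambda>l. [:\<eta> l, 1:]" "{1..n}"]
    by (simp_all add: Q_def degree_prod_eq_sum_degree)
  have coeff_Q_0: "coeff Q 0 = (\<Prod>l\<in>{1..n}. \<eta> l)"
    by (simp add: Q_def poly_0_coeff_0[symmetric] poly_prod)
  have "(\<Prod>l\<in>{1..Suc n}. [:\<eta> l, 1:]) = [:\<eta> (Suc n), 1:] * Q"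
    by (simp add: Q_def prod.nat_ivl_Suc' mult.commute)
  then have "coeff (\<Prod>l\<in>{1..Suc n}. [:\<eta> l, 1:]) k
      = \<eta> (Suc n) * coeff Q k + (if k = 0 then 0 else coeff Q (k - 1))"
    by (cases k) simp_all
  then show ?case
    using Suc.IH degree_Q coeff_Q_n coeff_Q_0
    by (auto simp: Q_def coeff_eq_0 prod.nat_ivl_Suc' mult.commute)
qed

lemma prod_delete_entry:
  assumes "k \<le> d"
  shows "(\<Prod>l\<in>{1..d}. f (delete_entry \<xi> k l)) = (\<Prod>l\<in>{0..d} - {k}. f (\<xi> l))"
proof -
  define h where "h l = (if l \<le> k then l - 1 else l)" for l :: nat
  have "bij_betw h {1..d} ({0..d} - {k})"
  proof (rule bij_betw_imageI)
    show "inj_on h {1..d}"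
      by (auto simp: inj_on_def h_def)
    have "h ` {1..d} \<subseteq> {0..d} - {k}"
      using assms by (auto simp: h_def)
    moreover have "m \<in> h ` {1..d}" if "m \<in> {0..d} - {k}" for m
      using that assms image_eqI[of m h "Suc m"] image_eqI[of m h m]
      by (cases "m < k") (auto simp: h_def)
    ultimately show "h ` {1..d} = {0..d} - {k}"
      by blast
  qed
  then have "(\<Prod>l\<in>{1..d}. f (\<xi> (h l))) = (\<Prod>l\<in>{0..d} - {k}. f (\<xi> l))"
    by (rule prod.reindex_bij_betw)
  then show ?thesis
    by (simp add: delete_entry_def h_def if_distrib[of \<xi>])
qed

lemma lagrange_interpolation:
  fixes p :: "'a::field poly"
  assumes "inj_on \<xi> {0..d}" "degree p \<le> d"
  shows "p = (\<Sum>k=0..d. smult (poly p (\<xi> k) / (\<Prod>l\<in>{0..d} - {k}. \<xi> k - \<xi> l))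
                              (\<Prod>l\<in>{0..d} - {k}. [:- \<xi> l, 1:]))"
    (is "p = ?q")
proof (rule poly_eqI_degree)
  fix x assume "x \<in> \<xi> ` {0..d}"
  then obtain i where i: "i \<in> {0..d}" "x = \<xi> i" by blast
  have "(\<Prod>l\<in>{0..d} - {k}. \<xi> i - \<xi> l) = 0 \<longleftrightarrow> i \<noteq> k" if "k \<in> {0..d}" for k
    using i that assms(1) by (auto simp: prod_zero_iff inj_on_eq_iff)
  then have "poly ?q x = (\<Sum>k=0..d. if k = i then poly p x else 0)"
    unfolding poly_sum i(2) by (intro sum.cong) (auto simp: poly_prod)
  then show "poly p x = poly ?q x"
    using i by simp
next
  have card: "card (\<xi> ` {0..d}) = Suc d"
    using assms(1) by (simp add: card_image)
  then show "degree p < card (\<xi> ` {0..d})"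
    using assms(2) by simp
  have "degree (\<Prod>l\<in>{0..d} - {k}. [:- \<xi> l, 1:]) \<le> d" if "k \<in> {0..d}" for k
    using that degree_prod_sum_le[of "{0..d} - {k}" "\<lambda>l. [:- \<xi> l, 1:]"] by simp
  then have "degree ?q \<le> d"
    by (intro degree_sum_le) (auto intro: order_trans[OF degree_smult_le])
  with card show "degree ?q < card (\<xi> ` {0..d})"
    by simp
qed

lemma coeff_eq_sum_Lmat:
  assumes "inj_on \<xi> {0..d}" "degree p \<le> d"
  shows "coeff p j = (\<Sum>k=0..d. Lmat d \<xi> j k * poly p (\<xi> k))"
proof -
  have Lmat_eq: "Lmat d \<xi> j k
      = coeff (\<Prod>l\<in>{0..d} - {k}. [:- \<xi> l, 1:]) j / (\<Prod>l\<in>{0..d} - {k}. \<xi> k - \<xi> l)"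
    if "k \<in> {0..d}" for k
    using that prod_delete_entry[of k d "\<lambda>x. [:- x, 1:]" \<xi>]
    by (simp add: Lmat_def acoef_eq_coeff_prod)
  show ?thesis
    by (subst lagrange_interpolation[OF assms])
       (auto simp: coeff_sum Lmat_eq intro!: sum.cong)
qed

lemma sum_Tmat_poly_eq_sum_coeff:
  assumes "inj_on \<xi> {0..d}" "degree p \<le> d"
  shows "(\<Sum>k=0..d. Tmat d \<xi> j k * poly p (\<xi> k))
    = (\<Sum>l=0..d. of_real (Ccoef j l) * coeff p l)"
  unfolding Tmat_def coeff_eq_sum_Lmat[OF assms] sum_distrib_left sum_distrib_right
  by (subst sum.swap) (simp add: mult.assoc)

theorem lemma5p16:
  fixes d :: nat and \<xi> :: "nat \<Rightarrow> complex" and p :: "complex poly"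
  assumes "d \<ge> 1"
    and "\<And>j k. j \<le> d \<Longrightarrow> k \<le> d \<Longrightarrow> j \<noteq> k \<Longrightarrow> \<xi> j \<noteq> \<xi> k"
    and "degree p = d"
  shows "cheb_norm p = (\<Sum>j=0..d. cmod (\<Sum>k=0..d. Tmat d \<xi> j k * poly p (\<xi> k)))"
proof -
  have inj: "inj_on \<xi> {0..d}"
    using assms(2) by (meson atLeastAtMost_iff inj_onI)
  have "(\<Sum>k=0..d. Tmat d \<xi> j k * poly p (\<xi> k)) = cheb_coeffs p j" for j
    using sum_Tmat_poly_eq_sum_coeff[OF inj] cheb_coeffs_eq_sum_coeff assms(3)
    by (simp add: atLeast0AtMost)
  then show ?thesis
    using assms(3) by (simp add: cheb_norm_def atLeast0AtMost)
qed

end
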